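(* Let $X$ be a Banach lattice and let $M$ and $N$ be nonzero Banach sublattices of $X$ such that $X=M\oplus_\infty N$ and the canonical projections from $X$ onto $M$ and onto $N$ are positive operators. Let $Y$ be a strictly monotone Banach lattice. If the pair $(X,Y)$ has the Bishop-Phelps-Bollobás property for positive operators, then $Y$ is uniformly monotone.
   Context: All spaces are real. $X=M\oplus_\infty N$ means every $x\in X$ decomposes uniquely as $x=m+n$ with $m\in M$, $n\in N$, and $\Vert x\Vert=\max\{\Vert m\Vert,\Vert n\Vert\}$. An operator is positive if it maps positive elements to positive elements. A Banach lattice $Y$ is strictly monotone if $x,y\ge0$ and $y\ne0$ imply $\Vert x+y\Vert>\Vert x\Vert$. A Banach lattice $E$ is uniformly monotone if for every $\varepsilon>0$ there is $\delta(\varepsilon)>0$ such that whenever $x\in E$ with $\Vert x\Vert=1$, $y\in E$, $x,y\ge0$, and $\Vert x+y\Vert\le 1+\delta(\varepsilon)$, then $\Vert y\Vert\le\varepsilon$. For a Banach space $X$, $S_X$ is its unit sphere and $L(X,Y)$ the space of bounded operators with operator norm. A pair $(X,Y)$ of Banach lattices has the Bishop-Phelps-Bollobás property for positive operators if for every $0<\varepsilon<1$ there exists $0<\eta(\varepsilon)<\varepsilon$ such that for every positive $S\in S_{L(X,Y)}$ and every $x_0\in S_X$ with $\Vert S(x_0)\Vert>1-\eta(\varepsilon)$, there exist $u_0\in S_X$ and a positive operator $T\in S_{L(X,Y)}$ with $\Vert T(u_0)\Vert=1$, $\Vert u_0-x_0\Vert<\varepsilon$ and $\Vert T-S\Vert<\varepsilon$.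 *)

theory Defs
  imports "HOL-Analysis.Analysis"
begin

text \<open>Real Banach lattices are modelled as types of class
  banach + ordered_real_vector + lattice (a Banach space carrying a compatible
  vector lattice order) satisfying the lattice-norm axiom below.\<close>

definition lat_abs :: "'a::{ordered_real_vector, lattice} \<Rightarrow> 'a" where
  "lat_abs x = sup x (- x)"

definition banach_lattice :: "'a::{banach, ordered_real_vector, lattice} itself \<Rightarrow> bool" where
  "banach_lattice _ \<longleftrightarrow> (\<forall>x y::'a. lat_abs x \<le> lat_abs y \<longrightarrow> norm x \<le> norm y)"

definition banach_sublattice :: "'a::{banach, ordered_real_vector, lattice} set \<Rightarrow> bool" where
  "banach_sublattice M \<longleftrightarrow> subspace M \<and> closed M \<and>
     (\<forall>x\<in>M. \<forall>y\<in>M. sup x y \<in> M \<and> inf x y \<in> M)"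

definition linf_direct_sum :: "'a::real_normed_vector set \<Rightarrow> 'a set \<Rightarrow> bool" where
  "linf_direct_sum M N \<longleftrightarrow>
     (\<forall>x. \<exists>!p. fst p \<in> M \<and> snd p \<in> N \<and> x = fst p + snd p) \<and>
     (\<forall>m\<in>M. \<forall>n\<in>N. norm (m + n) = max (norm m) (norm n))"

text \<open>The canonical projections onto M and N (along the decomposition) are positive.\<close>
definition positive_projections :: "'a::{real_normed_vector, ordered_ab_group_add} set \<Rightarrow> 'a set \<Rightarrow> bool" where
  "positive_projections M N \<longleftrightarrow>
     (\<forall>x m n. x = m + n \<and> m \<in> M \<and> n \<in> N \<and> 0 \<le> x \<longrightarrow> 0 \<le> m \<and> 0 \<le> n)"

definition positive_op :: "('a::{real_normed_vector, order, zero} \<Rightarrow>\<^sub>L 'b::{real_normed_vector, order}) \<Rightarrow> bool" where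
  "positive_op T \<longleftrightarrow> (\<forall>x. 0 \<le> x \<longrightarrow> 0 \<le> blinfun_apply T x)"

definition strictly_monotone :: "'a::{real_normed_vector, order} itself \<Rightarrow> bool" where
  "strictly_monotone _ \<longleftrightarrow> (\<forall>x y::'a. 0 \<le> x \<and> 0 \<le> y \<and> y \<noteq> 0 \<longrightarrow> norm (x + y) > norm x)"

definition uniformly_monotone :: "'a::{real_normed_vector, order} itself \<Rightarrow> bool" where
  "uniformly_monotone _ \<longleftrightarrow> (\<forall>\<epsilon>>0. \<exists>\<delta>>0. \<forall>x y::'a.
      norm x = 1 \<and> 0 \<le> x \<and> 0 \<le> y \<and> norm (x + y) \<le> 1 + \<delta> \<longrightarrow> norm y \<le> \<epsilon>)"

definition BPBp_pos :: "'a::{real_normed_vector, order} itself \<Rightarrow> 'b::{real_normed_vector, order} itself \<Rightarrow> bool" where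
  "BPBp_pos _ _ \<longleftrightarrow> (\<forall>\<epsilon>::real. 0 < \<epsilon> \<and> \<epsilon> < 1 \<longrightarrow> (\<exists>\<eta>. 0 < \<eta> \<and> \<eta> < \<epsilon> \<and>
      (\<forall>(S::'a \<Rightarrow>\<^sub>L 'b) x0. positive_op S \<and> norm S = 1 \<and> norm x0 = 1 \<and>
          norm (blinfun_apply S x0) > 1 - \<eta> \<longrightarrow>
        (\<exists>u0 (T::'a \<Rightarrow>\<^sub>L 'b). norm u0 = 1 \<and> positive_op T \<and> norm T = 1 \<and>
           norm (blinfun_apply T u0) = 1 \<and> norm (u0 - x0) < \<epsilon> \<and> norm (T - S) < \<epsilon>))))"

end

theory Submission
  imports Defs
begin

text \<open>Pick positive unit vectors \<open>m \<in> M\<close>, \<open>n \<in> N\<close> and, by Hahn--Banach for the sublinear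
  functional \<open>v \<mapsto> \<parallel>v\<^sup>+\<parallel>\<close>, positive norm-one functionals \<open>f\<close>, \<open>g\<close> with \<open>f m = g n = 1\<close>.
  Given \<open>x, y \<ge> 0\<close> in \<open>Y\<close> with \<open>\<parallel>x + y\<parallel> = 1\<close>, the positive operator
  \<open>S v = f (P\<^sub>M v) x + g (P\<^sub>N v) y\<close> has norm one, \<open>S m = x\<close> and \<open>S n = y\<close>.
  If \<open>\<parallel>x\<parallel>\<close> is close to 1, the Bishop--Phelps--Bollobas property yields a positive \<open>T\<close>
  close to \<open>S\<close> attaining its norm at some \<open>u\<close> close to \<open>m\<close>. Such a \<open>T\<close> vanishes on \<open>n\<close>:
  the \<open>N\<close>-component of \<open>\<bar>u\<bar>\<close> is small, so \<open>\<bar>u\<bar> + t n\<close> stays in the unit ball for some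
  \<open>t > 0\<close>, and strict monotonicity would give \<open>\<parallel>T (\<bar>u\<bar> + t n)\<parallel> > \<parallel>T \<bar>u\<bar>\<parallel> = 1\<close>.
  Hence \<open>\<parallel>y\<parallel> = \<parallel>(S - T) n\<parallel> \<le> \<parallel>S - T\<parallel>\<close> is small, which is uniform monotonicity.\<close>

section \<open>Hahn--Banach for sublinear functionals\<close>

definition sublinear :: "('a::real_vector \<Rightarrow> real) \<Rightarrow> bool" where
  "sublinear p \<longleftrightarrow>
     (\<forall>x y. p (x + y) \<le> p x + p y) \<and> (\<forall>c x. 0 \<le> c \<longrightarrow> p (c *\<^sub>R x) = c * p x)"

text \<open>Partial linear functionals dominated by \<open>p\<close> are represented by their graphs, so that
  Zorn's lemma can be applied to the subset order.\<close>

definition dominated_linear_graph :: "('a::real_vector \<Rightarrow> real) \<Rightarrow> ('a \<times> real) set \<Rightarrow> bool" where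
  "dominated_linear_graph p G \<longleftrightarrow>
     subspace G \<and> (\<forall>a. (0, a) \<in> G \<longrightarrow> a = 0) \<and> (\<forall>(x, a) \<in> G. a \<le> p x)"

lemma sublinear_zero: "sublinear p \<Longrightarrow> p 0 = 0"
  unfolding sublinear_def by (metis mult_zero_left order_refl scaleR_zero_left)

lemma dominated_linear_graph_unique:
  assumes "dominated_linear_graph p G" "(x, a) \<in> G" "(x, b) \<in> G"
  shows "a = b"
proof -
  have "(x, a) - (x, b) \<in> G"
    using assms unfolding dominated_linear_graph_def by (blast intro: subspace_diff)
  then show ?thesis
    using assms(1) unfolding dominated_linear_graph_def by force
qed

lemma dominated_linear_graph_separating_constant:
  assumes "sublinear p" "dominated_linear_graph p G"
  obtains c where "\<And>y b. (y, b) \<in> G \<Longrightarrow> b - p (y - z) \<le> c"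
    and "\<And>x a. (x, a) \<in> G \<Longrightarrow> c \<le> p (x + z) - a"
proof
  have G0: "(0, 0) \<in> G"
    using assms(2) unfolding dominated_linear_graph_def by (metis subspace_0 zero_prod_def)
  have key: "b - p (y - z) \<le> p (x + z) - a" if "(x, a) \<in> G" "(y, b) \<in> G" for x a y b
  proof -
    have "(x, a) + (y, b) \<in> G"
      using assms(2) that unfolding dominated_linear_graph_def by (blast intro: subspace_add)
    then have "a + b \<le> p (x + y)"
      using assms(2) unfolding dominated_linear_graph_def by auto
    also have "\<dots> \<le> p (x + z) + p (y - z)"
      using assms(1) unfolding sublinear_def by (metis add.assoc diff_add_cancel add.commute)
    finally show ?thesis by simp
  qed
  define L where "L = {b - p (y - z) | y b. (y, b) \<in> G}"
  have "bdd_above L"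
    unfolding L_def bdd_above_def using key[OF G0] by auto
  then show "b - p (y - z) \<le> Sup L" if "(y, b) \<in> G" for y b
    using that unfolding L_def by (blast intro: cSup_upper)
  show "Sup L \<le> p (x + z) - a" if "(x, a) \<in> G" for x a
    using G0 key[OF that] unfolding L_def by (blast intro: cSup_least)
qed

lemma dominated_linear_graph_line_bound:
  assumes p: "sublinear p" and G: "dominated_linear_graph p G"
    and lower: "\<And>y b. (y, b) \<in> G \<Longrightarrow> b - p (y - z) \<le> c"
    and upper: "\<And>x a. (x, a) \<in> G \<Longrightarrow> c \<le> p (x + z) - a"
    and xa: "(x, a) \<in> G"
  shows "a + t * c \<le> p (x + t *\<^sub>R z)"
proof -
  have hom: "\<And>t x. 0 \<le> t \<Longrightarrow> p (t *\<^sub>R x) = t * p x"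
    using p unfolding sublinear_def by blast
  have scaled: "(r *\<^sub>R x, r * a) \<in> G" for r
    using G xa subspace_scale[of G "(x, a)" r] unfolding dominated_linear_graph_def by simp
  consider "0 < t" | "t = 0" | "t < 0" by linarith
  then show ?thesis
  proof cases
    case 1
    have "t * c \<le> t * (p (inverse t *\<^sub>R x + z) - inverse t * a)"
      using upper[OF scaled] 1 by (simp add: mult_left_mono)
    also have "\<dots> = p (t *\<^sub>R (inverse t *\<^sub>R x + z)) - a"
      using 1 by (simp add: hom right_diff_distrib)
    also have "t *\<^sub>R (inverse t *\<^sub>R x + z) = x + t *\<^sub>R z"
      using 1 by (simp add: scaleR_add_right)
    finally show ?thesis by simp
  next
    case 2
    then show ?thesis
      using G xa unfolding dominated_linear_graph_def by auto
  next
    case 3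
    have "inverse (- t) * a - p (inverse (- t) *\<^sub>R x - z) \<le> c"
      using lower[OF scaled] .
    then have "a - - t * p (inverse (- t) *\<^sub>R x - z) \<le> - t * c"
      using 3 by (simp add: field_simps)
    moreover have "- t * p (inverse (- t) *\<^sub>R x - z) = p (x + t *\<^sub>R z)"
      using 3 hom[of "- t" "inverse (- t) *\<^sub>R x - z"] by (simp add: scaleR_diff_right)
    ultimately show ?thesis by simp
  qed
qed

lemma dominated_linear_graph_extend:
  assumes p: "sublinear p" and G: "dominated_linear_graph p G" and z: "\<And>a. (z, a) \<notin> G"
  obtains c where "dominated_linear_graph p (span (insert (z, c) G))"
proof -
  obtain c where lower: "\<And>y b. (y, b) \<in> G \<Longrightarrow> b - p (y - z) \<le> c"
    and upper: "\<And>x a. (x, a) \<in> G \<Longrightarrow> c \<le> p (x + z) - a"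
    using dominated_linear_graph_separating_constant[OF p G] by blast
  have sub: "subspace G" and single: "\<And>a. (0, a) \<in> G \<Longrightarrow> a = 0"
    using G unfolding dominated_linear_graph_def by auto
  have span_ext: "(x, a) \<in> span (insert (z, c) G) \<longleftrightarrow> (\<exists>k. (x - k *\<^sub>R z, a - k * c) \<in> G)" for x a
    by (simp add: span_insert span_eq_iff[THEN iffD2, OF sub])
  have "dominated_linear_graph p (span (insert (z, c) G))"
    unfolding dominated_linear_graph_def
  proof (intro conjI allI impI ballI)
    fix a assume "(0, a) \<in> span (insert (z, c) G)"
    then obtain k where k: "(- (k *\<^sub>R z), a - k * c) \<in> G"
      using span_ext by auto
    have "k = 0"
    proof (rule ccontr)
      assume "k \<noteq> 0"
      then show False
        using z subspace_scale[OF sub k, of "- inverse k"] by simp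
    qed
    then show "a = 0" using single k by simp
  next
    fix q assume q: "q \<in> span (insert (z, c) G)"
    obtain x a where q_eq: "q = (x, a)" by (cases q)
    then obtain k where "(x - k *\<^sub>R z, a - k * c) \<in> G"
      using q span_ext by auto
    from dominated_linear_graph_line_bound[OF p G lower upper this, of k]
    show "case q of (x, a) \<Rightarrow> a \<le> p x"
      by (simp add: q_eq)
  qed simp
  then show ?thesis ..
qed

lemma dominated_linear_graph_Union:
  assumes ne: "C \<noteq> {}" and dlg: "\<And>G. G \<in> C \<Longrightarrow> dominated_linear_graph p G"
    and chain: "\<And>G H. G \<in> C \<Longrightarrow> H \<in> C \<Longrightarrow> G \<subseteq> H \<or> H \<subseteq> G"
  shows "dominated_linear_graph p (\<Union>C)"
proof -
  have common: "\<exists>G\<in>C. u \<in> G \<and> v \<in> G" if "u \<in> \<Union>C" "v \<in> \<Union>C" for u v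
    using that chain by blast
  have "subspace (\<Union>C)"
    unfolding subspace_def
  proof (intro conjI ballI allI)
    show "0 \<in> \<Union>C"
      using ne dlg unfolding dominated_linear_graph_def by (blast intro: subspace_0)
    show "u + v \<in> \<Union>C" if "u \<in> \<Union>C" "v \<in> \<Union>C" for u v
      using common[OF that] dlg unfolding dominated_linear_graph_def by (blast intro: subspace_add)
    show "r *\<^sub>R u \<in> \<Union>C" if "u \<in> \<Union>C" for r u
      using that dlg unfolding dominated_linear_graph_def by (blast intro: subspace_scale)
  qed
  then show ?thesis
    using dlg unfolding dominated_linear_graph_def by blast
qed

lemma dominated_linear_graph_total:
  assumes G: "dominated_linear_graph p G" and total: "\<And>x. \<exists>a. (x, a) \<in> G"
  obtains F where "linear F" "\<And>x. (x, F x) \<in> G"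
proof
  define F where "F x = (THE a. (x, a) \<in> G)" for x
  show graph: "(x, F x) \<in> G" for x
    unfolding F_def using total dominated_linear_graph_unique[OF G] by (metis theI)
  have sub: "subspace G"
    using G unfolding dominated_linear_graph_def by blast
  have F_eq: "F x = a" if "(x, a) \<in> G" for x a
    using dominated_linear_graph_unique[OF G graph that] .
  show "linear F"
  proof (rule linearI)
    show "F (x + y) = F x + F y" for x y
      using subspace_add[OF sub graph graph] by (intro F_eq) simp
    show "F (r *\<^sub>R x) = r *\<^sub>R F x" for r x
      using subspace_scale[OF sub graph] by (intro F_eq) simp
  qed
qed

lemma dominated_linear_graph_span_singleton:
  assumes p: "sublinear p"
  shows "dominated_linear_graph p (span {(x0, p x0)})"
  unfolding dominated_linear_graph_def
proof (intro conjI allI impI ballI)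
  have p0: "p 0 = 0" using sublinear_zero[OF p] .
  show "a = 0" if "(0, a) \<in> span {(x0, p x0)}" for a
  proof -
    from that obtain k where "(0, a) = k *\<^sub>R (x0, p x0)" unfolding span_singleton by blast
    then have "k *\<^sub>R x0 = 0" "a = k * p x0" by simp_all
    then show ?thesis using p0 by auto
  qed
  fix q assume "q \<in> span {(x0, p x0)}"
  then obtain k where q: "q = (k *\<^sub>R x0, k * p x0)" unfolding span_singleton by auto
  have "k * p x0 \<le> p (k *\<^sub>R x0)"
  proof (cases "0 \<le> k")
    case True
    then show ?thesis using p unfolding sublinear_def by simp
  next
    case False
    have "0 \<le> p x0 + p (- x0)"
      using p p0 unfolding sublinear_def by (metis add.right_inverse)
    then have "- k * (- p x0) \<le> - k * p (- x0)"
      using False by (intro mult_left_mono) auto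
    also have "\<dots> = p ((- k) *\<^sub>R (- x0))"
      using p False unfolding sublinear_def by (metis neg_0_le_iff_le nle_le)
    also have "(- k) *\<^sub>R (- x0) = k *\<^sub>R x0" by simp
    finally show ?thesis by simp
  qed
  then show "case q of (x, a) \<Rightarrow> a \<le> p x" by (simp add: q)
qed simp

lemma maximal_dominated_linear_graph_exists:
  assumes G0: "dominated_linear_graph p G0"
  obtains Gm where "dominated_linear_graph p Gm" "G0 \<subseteq> Gm"
    "\<And>G. dominated_linear_graph p G \<Longrightarrow> Gm \<subseteq> G \<Longrightarrow> G = Gm"
proof -
  define \<A> where "\<A> = {G. dominated_linear_graph p G \<and> G0 \<subseteq> G}"
  have "\<exists>Gm\<in>\<A>. \<forall>G\<in>\<A>. Gm \<subseteq> G \<longrightarrow> G = Gm"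
  proof (rule subset_Zorn_nonempty)
    show "\<A> \<noteq> {}"
      using G0 unfolding \<A>_def by blast
    show "\<Union>C \<in> \<A>" if "C \<noteq> {}" "subset.chain \<A> C" for C
    proof -
      have "dominated_linear_graph p (\<Union>C)"
      proof (rule dominated_linear_graph_Union)
        show "dominated_linear_graph p G" if "G \<in> C" for G
          using that \<open>subset.chain \<A> C\<close> unfolding \<A>_def subset.chain_def by blast
        show "G \<subseteq> H \<or> H \<subseteq> G" if "G \<in> C" "H \<in> C" for G H
          using that \<open>subset.chain \<A> C\<close> unfolding subset.chain_def by blast
      qed fact
      moreover have "G0 \<subseteq> \<Union>C"
        using that unfolding \<A>_def subset.chain_def by blast
      ultimately show ?thesis unfolding \<A>_def by blast
    qed
  qed
  then obtain Gm where Gm: "Gm \<in> \<A>" and max: "\<And>G. G \<in> \<A> \<Longrightarrow> Gm \<subseteq> G \<Longrightarrow> G = Gm"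
    by blast
  show ?thesis
  proof (rule that)
    show "dominated_linear_graph p Gm" "G0 \<subseteq> Gm"
      using Gm unfolding \<A>_def by simp_all
    show "G = Gm" if "dominated_linear_graph p G" "Gm \<subseteq> G" for G
      using max[of G] that Gm unfolding \<A>_def by blast
  qed
qed

lemma maximal_dominated_linear_graph_total:
  assumes p: "sublinear p" and Gm: "dominated_linear_graph p Gm"
    and max: "\<And>G. dominated_linear_graph p G \<Longrightarrow> Gm \<subseteq> G \<Longrightarrow> G = Gm"
  shows "\<exists>a. (z, a) \<in> Gm"
proof (rule ccontr)
  assume z: "\<nexists>a. (z, a) \<in> Gm"
  then obtain c where ext: "dominated_linear_graph p (span (insert (z, c) Gm))"
    using dominated_linear_graph_extend[OF p Gm] by blast
  have "Gm \<subseteq> span (insert (z, c) Gm)" "(z, c) \<in> span (insert (z, c) Gm)"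
    by (auto intro: span_base)
  with max[OF ext] z show False by simp
qed

theorem hahn_banach_sublinear:
  assumes p: "sublinear p"
  obtains F where "linear F" "\<And>x. F x \<le> p x" "F x0 = p x0"
proof -
  obtain Gm where Gm: "dominated_linear_graph p Gm" "span {(x0, p x0)} \<subseteq> Gm"
    and max: "\<And>G. dominated_linear_graph p G \<Longrightarrow> Gm \<subseteq> G \<Longrightarrow> G = Gm"
    using maximal_dominated_linear_graph_exists[OF dominated_linear_graph_span_singleton[OF p]] by blast
  obtain F where "linear F" and graph: "\<And>x. (x, F x) \<in> Gm"
    using dominated_linear_graph_total[OF Gm(1) maximal_dominated_linear_graph_total[OF p Gm(1) max]]
    by blast
  moreover have "F x \<le> p x" for x
    using Gm(1) graph unfolding dominated_linear_graph_def by blast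
  moreover have "F x0 = p x0"
    using dominated_linear_graph_unique[OF Gm(1) graph] Gm(2) span_base[of "(x0, p x0)"] by blast
  ultimately show ?thesis using that by simp
qed

section \<open>Banach lattices\<close>

lemma lat_abs_ge:
  fixes x :: "'a::{ordered_real_vector, lattice}"
  shows "x \<le> lat_abs x" "- x \<le> lat_abs x"
  unfolding lat_abs_def by simp_all

lemma lat_abs_nonneg:
  fixes x :: "'a::{ordered_real_vector, lattice}"
  shows "0 \<le> lat_abs x"
proof -
  have "0 \<le> lat_abs x + lat_abs x"
    using add_mono[OF lat_abs_ge(1)[of x] lat_abs_ge(2)[of x]] by simp
  then have "0 \<le> (1/2::real) *\<^sub>R (lat_abs x + lat_abs x)"
    by (intro scaleR_nonneg_nonneg) auto
  then show ?thesis
    by (metis scaleR_half_double)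
qed

lemma lat_abs_of_nonneg:
  fixes x :: "'a::{ordered_real_vector, lattice}"
  assumes "0 \<le> x"
  shows "lat_abs x = x"
  using assms unfolding lat_abs_def by (simp add: sup_absorb1 order_trans[of "- x" 0 x])

lemma lat_abs_add_le:
  fixes x y :: "'a::{ordered_real_vector, lattice}"
  shows "lat_abs (x + y) \<le> lat_abs x + lat_abs y"
  using add_mono[OF lat_abs_ge(1)[of x] lat_abs_ge(1)[of y]]
    add_mono[OF lat_abs_ge(2)[of x] lat_abs_ge(2)[of y]]
  unfolding lat_abs_def[of "x + y"] by simp

lemma lat_abs_scaleR_le:
  fixes x :: "'a::{ordered_real_vector, lattice}"
  assumes "0 \<le> x"
  shows "lat_abs (c *\<^sub>R x) \<le> \<bar>c\<bar> *\<^sub>R x"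
  using scaleR_right_mono[OF _ assms, of c "\<bar>c\<bar>"] scaleR_right_mono[OF _ assms, of "- c" "\<bar>c\<bar>"]
  unfolding lat_abs_def by simp

lemma sup_zero_scaleR:
  fixes x :: "'a::{ordered_real_vector, lattice}"
  assumes "0 \<le> c"
  shows "sup (c *\<^sub>R x) 0 = c *\<^sub>R sup x 0"
proof (cases "c = 0")
  case False
  with assms have c: "0 < c" by simp
  have le: "sup (d *\<^sub>R v) 0 \<le> d *\<^sub>R sup v 0" if "0 < d" for d and v :: 'a
    using that by (intro sup_least scaleR_left_mono scaleR_nonneg_nonneg) auto
  have "c *\<^sub>R sup x 0 = c *\<^sub>R sup (inverse c *\<^sub>R (c *\<^sub>R x)) 0"
    using c by simp
  also have "\<dots> \<le> c *\<^sub>R (inverse c *\<^sub>R sup (c *\<^sub>R x) 0)"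
    using c le[of "inverse c" "c *\<^sub>R x"] by (intro scaleR_left_mono) auto
  also have "\<dots> = sup (c *\<^sub>R x) 0"
    using c by simp
  finally show ?thesis
    using le[OF c, of x] by (rule antisym[rotated])
qed simp

lemma banach_lattice_norm_lat_abs:
  assumes "banach_lattice TYPE('a::{banach, ordered_real_vector, lattice})"
  shows "norm (lat_abs (x::'a)) = norm x"
  using assms lat_abs_of_nonneg[OF lat_abs_nonneg, of x] unfolding banach_lattice_def
  by (metis order_refl antisym)

lemma banach_lattice_norm_mono:
  assumes "banach_lattice TYPE('a::{banach, ordered_real_vector, lattice})"
    and "0 \<le> (x::'a)" "x \<le> y"
  shows "norm x \<le> norm y"
  using assms lat_abs_of_nonneg[of x] lat_abs_of_nonneg[of y] order_trans[of 0 x y]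
  unfolding banach_lattice_def by metis

lemma positive_op_lat_abs_le:
  fixes T :: "'a::{real_normed_vector, ordered_real_vector, lattice} \<Rightarrow>\<^sub>L
    'b::{real_normed_vector, ordered_real_vector, lattice}"
  assumes "positive_op T"
  shows "lat_abs (T u) \<le> T (lat_abs u)"
proof -
  have "0 \<le> T (lat_abs u - u)"
    using assms lat_abs_ge(1)[of u] unfolding positive_op_def by simp
  then have "T u \<le> T (lat_abs u)"
    by (simp add: blinfun.diff_right)
  have "0 \<le> T (lat_abs u + u)"
    using assms add_right_mono[OF lat_abs_ge(2)[of u], of u] unfolding positive_op_def by simp
  then have "0 - T u \<le> (T (lat_abs u) + T u) - T u"
    by (intro diff_right_mono) (simp add: blinfun.add_right)
  then have "- T u \<le> T (lat_abs u)"
    by simp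
  with \<open>T u \<le> T (lat_abs u)\<close> show ?thesis
    unfolding lat_abs_def[of "T u"] by simp
qed

lemma sublinear_norm_sup_zero:
  assumes bl: "banach_lattice TYPE('a::{banach, ordered_real_vector, lattice})"
  shows "sublinear (\<lambda>x::'a. norm (sup x 0))"
  unfolding sublinear_def
proof (intro conjI allI impI)
  fix x y :: 'a
  have "sup (x + y) 0 \<le> sup x 0 + sup y 0"
    by (intro sup_least add_mono add_nonneg_nonneg) auto
  then have "norm (sup (x + y) 0) \<le> norm (sup x 0 + sup y 0)"
    by (intro banach_lattice_norm_mono[OF bl]) auto
  also have "\<dots> \<le> norm (sup x 0) + norm (sup y 0)"
    by (rule norm_triangle_ineq)
  finally show "norm (sup (x + y) 0) \<le> norm (sup x 0) + norm (sup y 0)" .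
next
  fix c :: real and x :: 'a
  assume "0 \<le> c"
  then show "norm (sup (c *\<^sub>R x) 0) = c * norm (sup x 0)"
    by (simp add: sup_zero_scaleR)
qed

lemma positive_norming_functional:
  fixes m :: "'a::{banach, ordered_real_vector, lattice}"
  assumes bl: "banach_lattice TYPE('a)" and m: "0 \<le> m" "norm m = 1"
  obtains f :: "'a \<Rightarrow> real"
  where "linear f" "\<And>x. 0 \<le> x \<Longrightarrow> 0 \<le> f x" "\<And>x. \<bar>f x\<bar> \<le> norm x" "f m = 1"
proof -
  obtain f where f: "linear f" "\<And>x. f x \<le> norm (sup x 0)" "f m = norm (sup m 0)"
    using hahn_banach_sublinear[OF sublinear_norm_sup_zero[OF bl]] by blast
  have le_norm: "f x \<le> norm x" for x
  proof -
    have "sup x 0 \<le> lat_abs x"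
      using lat_abs_ge(1) lat_abs_nonneg by (rule sup_least)
    then have "norm (sup x 0) \<le> norm (lat_abs x)"
      by (intro banach_lattice_norm_mono[OF bl]) auto
    then show ?thesis
      using f(2)[of x] banach_lattice_norm_lat_abs[OF bl] by simp
  qed
  show ?thesis
  proof
    show "0 \<le> f x" if "0 \<le> x" for x
      using f(2)[of "- x"] that linear_neg[OF f(1), of x] by (simp add: sup_absorb2)
    show "\<bar>f x\<bar> \<le> norm x" for x
      using le_norm[of x] le_norm[of "- x"] linear_neg[OF f(1), of x] by simp
    show "f m = 1"
      using f(3) m by (simp add: sup_absorb1)
  qed (fact f(1))
qed

lemma banach_sublattice_lat_abs:
  assumes "banach_sublattice M" "x \<in> M"
  shows "lat_abs x \<in> M"
  using assms subspace_neg[of M x] unfolding banach_sublattice_def lat_abs_def by blast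

lemma banach_sublattice_normalized_nonneg:
  assumes bl: "banach_lattice TYPE('a::{banach, ordered_real_vector, lattice})"
    and M: "banach_sublattice M" and nontrivial: "M \<noteq> {0::'a}"
  obtains m where "m \<in> M" "0 \<le> m" "norm m = 1"
proof -
  have sub: "subspace M"
    using M unfolding banach_sublattice_def by blast
  then obtain x where x: "x \<in> M" "x \<noteq> 0"
    using nontrivial subspace_0 by blast
  show ?thesis
  proof
    show "inverse (norm x) *\<^sub>R lat_abs x \<in> M"
      using subspace_scale[OF sub banach_sublattice_lat_abs[OF M x(1)]] .
    show "0 \<le> inverse (norm x) *\<^sub>R lat_abs x"
      using lat_abs_nonneg by (intro scaleR_nonneg_nonneg) auto
    show "norm (inverse (norm x) *\<^sub>R lat_abs x) = 1"
      using x(2) banach_lattice_norm_lat_abs[OF bl] by simp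
  qed
qed

lemma positive_op_norm_lat_abs:
  fixes T :: "'a::{banach, ordered_real_vector, lattice} \<Rightarrow>\<^sub>L 'b::{banach, ordered_real_vector, lattice}"
  assumes bl: "banach_lattice TYPE('a)" "banach_lattice TYPE('b)"
    and T: "positive_op T" "norm T = 1" and u: "norm u = 1" "norm (T u) = 1"
  shows "norm (T (lat_abs u)) = 1"
proof (rule antisym)
  show "norm (T (lat_abs u)) \<le> 1"
    using norm_blinfun[of T "lat_abs u"] T(2) u(1) banach_lattice_norm_lat_abs[OF bl(1)] by simp
  have "lat_abs (T u) \<le> lat_abs (T (lat_abs u))"
    using positive_op_lat_abs_le[OF T(1)] T(1) lat_abs_nonneg[of u] lat_abs_of_nonneg
    unfolding positive_op_def by metis
  then show "1 \<le> norm (T (lat_abs u))"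
    using bl(2) u(2) unfolding banach_lattice_def by metis
qed

lemma banach_lattice_norm_combination_le:
  fixes x y :: "'b::{banach, ordered_real_vector, lattice}"
  assumes bl: "banach_lattice TYPE('b)" and xy: "0 \<le> x" "0 \<le> y"
    and ab: "\<bar>a\<bar> \<le> r" "\<bar>b\<bar> \<le> r"
  shows "norm (a *\<^sub>R x + b *\<^sub>R y) \<le> r * norm (x + y)"
proof -
  have "lat_abs (a *\<^sub>R x + b *\<^sub>R y) \<le> lat_abs (a *\<^sub>R x) + lat_abs (b *\<^sub>R y)"
    by (rule lat_abs_add_le)
  also have "\<dots> \<le> \<bar>a\<bar> *\<^sub>R x + \<bar>b\<bar> *\<^sub>R y"
    by (intro add_mono lat_abs_scaleR_le xy)
  also have "\<dots> \<le> r *\<^sub>R x + r *\<^sub>R y"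
    using ab xy by (intro add_mono scaleR_right_mono)
  also have "\<dots> = lat_abs (r *\<^sub>R (x + y))"
  proof -
    have "0 \<le> r" using abs_ge_zero[of a] ab(1) by linarith
    with xy show ?thesis
      by (simp add: lat_abs_of_nonneg scaleR_nonneg_nonneg scaleR_add_right)
  qed
  finally have "norm (a *\<^sub>R x + b *\<^sub>R y) \<le> norm (r *\<^sub>R (x + y))"
    using bl unfolding banach_lattice_def by blast
  then show ?thesis
    using ab by simp
qed

lemma one_minus_lt_inverse:
  fixes \<delta> s :: real
  assumes "0 < \<delta>" "0 < s" "s \<le> 1 + \<delta>"
  shows "1 - \<delta> < inverse s"
proof (cases "\<delta> \<le> 1")
  case True
  have "(1 - \<delta>) * s \<le> (1 - \<delta>) * (1 + \<delta>)"
    using assms True by (intro mult_left_mono) auto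
  also have "\<dots> = 1 - \<delta>\<^sup>2"
    by (simp add: algebra_simps power2_eq_square)
  also have "\<dots> < 1"
    using assms by simp
  finally show ?thesis
    using assms by (simp add: field_simps)
next
  case False
  then show ?thesis
    using assms by (simp add: less_trans[of "1 - \<delta>" 0])
qed

lemma uniformly_monotoneI_normalized:
  assumes bl: "banach_lattice TYPE('b::{banach, ordered_real_vector, lattice})"
    and tail: "\<And>\<epsilon>. 0 < \<epsilon> \<Longrightarrow> \<epsilon> < 1 \<Longrightarrow> \<exists>\<eta>>0. \<forall>x y::'b.
      0 \<le> x \<and> 0 \<le> y \<and> norm (x + y) = 1 \<and> 1 - \<eta> < norm x \<longrightarrow> norm y < \<epsilon>"
  shows "uniformly_monotone TYPE('b)"
  unfolding uniformly_monotone_def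
proof (intro allI impI)
  fix \<epsilon> :: real assume "0 < \<epsilon>"
  define \<epsilon>' where "\<epsilon>' = min (1/2) (\<epsilon>/2)"
  have "0 < \<epsilon>'" "\<epsilon>' < 1"
    using \<open>0 < \<epsilon>\<close> unfolding \<epsilon>'_def by auto
  from tail[OF this] obtain \<eta> where "0 < \<eta>" and \<eta>: "\<forall>x y::'b. 0 \<le> x \<and> 0 \<le> y \<and> norm (x + y) = 1 \<and>
      1 - \<eta> < norm x \<longrightarrow> norm y < \<epsilon>'"
    by blast
  define \<delta> where "\<delta> = min \<eta> 1"
  have \<delta>: "0 < \<delta>" "\<delta> \<le> 1" "\<delta> \<le> \<eta>"
    using \<open>0 < \<eta>\<close> unfolding \<delta>_def by auto
  show "\<exists>\<delta>>0. \<forall>x y::'b.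
      norm x = 1 \<and> 0 \<le> x \<and> 0 \<le> y \<and> norm (x + y) \<le> 1 + \<delta> \<longrightarrow> norm y \<le> \<epsilon>"
  proof (intro exI[of _ \<delta>] conjI allI impI)
    fix x y :: 'b
    assume xy: "norm x = 1 \<and> 0 \<le> x \<and> 0 \<le> y \<and> norm (x + y) \<le> 1 + \<delta>"
    define s where "s = norm (x + y)"
    have s: "1 \<le> s" "s \<le> 1 + \<delta>"
      using xy banach_lattice_norm_mono[OF bl, of x "x + y"] unfolding s_def by auto
    have "1 - \<delta> < inverse s"
      using one_minus_lt_inverse[OF \<delta>(1) _ s(2)] s(1) by simp
    then have "1 - \<eta> < inverse s"
      using \<delta> by linarith
    moreover have "norm (inverse s *\<^sub>R x + inverse s *\<^sub>R y) = 1"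
      unfolding scaleR_add_right[symmetric] using s by (simp add: s_def[symmetric])
    ultimately have "norm (inverse s *\<^sub>R y) < \<epsilon>'"
      using \<eta>[rule_format, of "inverse s *\<^sub>R x" "inverse s *\<^sub>R y"] xy s
      by (simp add: scaleR_nonneg_nonneg)
    then have "norm y < s * \<epsilon>'"
      using s by (simp add: field_simps)
    also have "\<dots> \<le> 2 * (\<epsilon> / 2)"
      using s \<delta> \<open>0 < \<epsilon>'\<close> by (intro mult_mono) (auto simp: \<epsilon>'_def)
    finally show "norm y \<le> \<epsilon>" by simp
  qed (fact \<delta>(1))
qed

section \<open>Positive operators on \<open>M \<oplus>\<^sub>\<infinity> N\<close>\<close>

lemma positive_rank_two_operator:
  fixes \<phi> \<psi> :: "'a::{banach, ordered_real_vector, lattice} \<Rightarrow> real"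
    and x y :: "'b::{banach, ordered_real_vector, lattice}"
  assumes bl: "banach_lattice TYPE('b)"
    and lin: "linear \<phi>" "linear \<psi>"
    and pos: "\<And>v. 0 \<le> v \<Longrightarrow> 0 \<le> \<phi> v" "\<And>v. 0 \<le> v \<Longrightarrow> 0 \<le> \<psi> v"
    and bound: "\<And>v. \<bar>\<phi> v\<bar> \<le> norm v" "\<And>v. \<bar>\<psi> v\<bar> \<le> norm v"
    and xy: "0 \<le> x" "0 \<le> y" "norm (x + y) \<le> 1"
  obtains S :: "'a \<Rightarrow>\<^sub>L 'b"
  where "positive_op S" "norm S \<le> 1" "\<And>v. S v = \<phi> v *\<^sub>R x + \<psi> v *\<^sub>R y"
proof -
  define Sf where "Sf v = \<phi> v *\<^sub>R x + \<psi> v *\<^sub>R y" for v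
  have Sf_le: "norm (Sf v) \<le> norm v" for v
  proof -
    have "norm (Sf v) \<le> norm v * norm (x + y)"
      unfolding Sf_def using bound by (intro banach_lattice_norm_combination_le[OF bl xy(1,2)])
    also have "\<dots> \<le> norm v"
      using xy(3) by (simp add: mult_left_le)
    finally show ?thesis .
  qed
  have "bounded_linear Sf"
  proof (rule bounded_linear_intro[where K = 1])
    show "Sf (u + v) = Sf u + Sf v" for u v
      unfolding Sf_def by (simp add: linear_add[OF lin(1)] linear_add[OF lin(2)] algebra_simps)
    show "Sf (r *\<^sub>R v) = r *\<^sub>R Sf v" for r v
      unfolding Sf_def by (simp add: linear_scale[OF lin(1)] linear_scale[OF lin(2)] scaleR_add_right)
  qed (simp add: Sf_le)
  then have S: "blinfun_apply (Blinfun Sf) = Sf"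
    by (rule bounded_linear_Blinfun_apply)
  show ?thesis
  proof
    show "positive_op (Blinfun Sf)"
      unfolding positive_op_def S Sf_def using pos xy by (simp add: scaleR_nonneg_nonneg)
    show "norm (Blinfun Sf) \<le> 1"
      using Sf_le by (intro norm_blinfun_bound) (simp_all add: S)
  qed (simp add: S Sf_def)
qed

locale lattice_linf_sum =
  fixes M N :: "'a::{banach, ordered_real_vector, lattice} set"
  assumes banach_lattice: "banach_lattice TYPE('a)"
    and sublattice_M: "banach_sublattice M" and sublattice_N: "banach_sublattice N"
    and direct_sum: "linf_direct_sum M N"
    and positive_projections: "positive_projections M N"
begin

lemma subspace_M: "subspace M" and subspace_N: "subspace N"
  using sublattice_M sublattice_N unfolding banach_sublattice_def by blast+

definition projM :: "'a \<Rightarrow> 'a" where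
  "projM x = fst (THE p. fst p \<in> M \<and> snd p \<in> N \<and> x = fst p + snd p)"

definition projN :: "'a \<Rightarrow> 'a" where
  "projN x = x - projM x"

lemma proj_mem: "projM x \<in> M" "projN x \<in> N"
  and projM_add_projN: "projM x + projN x = x"
proof -
  define p where "p = (THE p. fst p \<in> M \<and> snd p \<in> N \<and> x = fst p + snd p)"
  have "\<exists>!p. fst p \<in> M \<and> snd p \<in> N \<and> x = fst p + snd p"
    using direct_sum unfolding linf_direct_sum_def by blast
  from theI'[OF this] have p: "fst p \<in> M" "snd p \<in> N" "x = fst p + snd p"
    unfolding p_def by auto
  have "projM x = fst p" "projN x = snd p"
    unfolding projN_def projM_def p_def[symmetric] using p(3) by simp_all
  with p show "projM x \<in> M" "projN x \<in> N" "projM x + projN x = x"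
    by simp_all
qed

lemma proj_of_sum:
  assumes "m \<in> M" "n \<in> N"
  shows "projM (m + n) = m" "projN (m + n) = n"
proof -
  have "\<exists>!p. fst p \<in> M \<and> snd p \<in> N \<and> m + n = fst p + snd p"
    using direct_sum unfolding linf_direct_sum_def by blast
  then have "(THE p. fst p \<in> M \<and> snd p \<in> N \<and> m + n = fst p + snd p) = (m, n)"
    using assms by (intro the1_equality) auto
  then show "projM (m + n) = m" "projN (m + n) = n"
    unfolding projN_def projM_def by simp_all
qed

lemma linear_projM: "linear projM"
proof (rule linearI)
  show "projM (x + y) = projM x + projM y" for x y
    using proj_of_sum(1)[of "projM x + projM y" "projN x + projN y"] proj_mem subspace_M subspace_N
      projM_add_projN[of x] projM_add_projN[of y]
    by (simp add: subspace_add algebra_simps)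
  show "projM (r *\<^sub>R x) = r *\<^sub>R projM x" for r x
    using proj_of_sum(1)[of "r *\<^sub>R projM x" "r *\<^sub>R projN x"] proj_mem subspace_M subspace_N
      projM_add_projN[of x]
    by (simp add: subspace_scale flip: scaleR_add_right)
qed

lemma linear_projN: "linear projN"
  unfolding projN_def[abs_def] using linear_projM by (intro linear_compose_sub linear_ident)

lemma norm_eq_max_proj: "norm x = max (norm (projM x)) (norm (projN x))"
  using direct_sum proj_mem projM_add_projN[of x] unfolding linf_direct_sum_def by metis

lemma proj_nonneg:
  assumes "0 \<le> x"
  shows "0 \<le> projM x" "0 \<le> projN x"
  using positive_projections assms proj_mem projM_add_projN[of x]
  unfolding positive_projections_def by metis+

lemma projM_eq_zero: "n \<in> N \<Longrightarrow> projM n = 0"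
  using proj_of_sum(1)[of 0 n] subspace_M subspace_0 by fastforce

lemma projN_eq_zero: "m \<in> M \<Longrightarrow> projN m = 0"
  using proj_of_sum(2)[of m 0] subspace_N subspace_0 by fastforce

lemma norm_projN_le_dist:
  assumes "m \<in> M"
  shows "norm (projN u) \<le> norm (u - m)"
proof -
  have "projN (u - m) = projN u"
    using linear_diff[OF linear_projN] projN_eq_zero[OF assms] by simp
  then show ?thesis
    using norm_eq_max_proj[of "u - m"] by simp
qed

lemma norm_projN_lat_abs_le: "norm (projN (lat_abs u)) \<le> norm (projN u)"
proof -
  have "lat_abs u \<le> lat_abs (projM u) + lat_abs (projN u)"
    using lat_abs_add_le[of "projM u" "projN u"] projM_add_projN[of u] by simp
  then have "0 \<le> (lat_abs (projM u) + lat_abs (projN u)) - lat_abs u"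
    by simp
  then have "0 \<le> projN ((lat_abs (projM u) + lat_abs (projN u)) - lat_abs u)"
    by (rule proj_nonneg)
  also have "\<dots> = lat_abs (projN u) - projN (lat_abs u)"
    using banach_sublattice_lat_abs[OF sublattice_M proj_mem(1)]
      banach_sublattice_lat_abs[OF sublattice_N proj_mem(2)]
    by (simp add: linear_diff[OF linear_projN] proj_of_sum(2))
  finally have "projN (lat_abs u) \<le> lat_abs (projN u)"
    by simp
  then have "norm (projN (lat_abs u)) \<le> norm (lat_abs (projN u))"
    using banach_lattice_norm_mono[OF banach_lattice] proj_nonneg(2)[OF lat_abs_nonneg] by blast
  then show ?thesis
    using banach_lattice_norm_lat_abs[OF banach_lattice] by simp
qed

lemma two_point_positive_operator:
  fixes x y :: "'b::{banach, ordered_real_vector, lattice}"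
  assumes bl: "banach_lattice TYPE('b)"
    and m: "m \<in> M" "0 \<le> m" "norm m = 1" and n: "n \<in> N" "0 \<le> n" "norm n = 1"
    and xy: "0 \<le> x" "0 \<le> y" "norm (x + y) = 1"
  obtains S :: "'a \<Rightarrow>\<^sub>L 'b" where "positive_op S" "norm S = 1" "S m = x" "S n = y"
proof -
  obtain f where f: "linear f" "\<And>v. 0 \<le> v \<Longrightarrow> 0 \<le> f v" "\<And>v. \<bar>f v\<bar> \<le> norm v" "f m = 1"
    using positive_norming_functional[OF banach_lattice m(2,3)] by blast
  obtain g where g: "linear g" "\<And>v. 0 \<le> v \<Longrightarrow> 0 \<le> g v" "\<And>v. \<bar>g v\<bar> \<le> norm v" "g n = 1"
    using positive_norming_functional[OF banach_lattice n(2,3)] by blast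
  have lin: "linear (f \<circ> projM)" "linear (g \<circ> projN)"
    using f(1) g(1) linear_projM linear_projN by (auto intro: linear_compose)
  have pos: "0 \<le> (f \<circ> projM) v" "0 \<le> (g \<circ> projN) v" if "0 \<le> v" for v
    using f(2) g(2) proj_nonneg[OF that] by simp_all
  have bound: "\<bar>(f \<circ> projM) v\<bar> \<le> norm v" "\<bar>(g \<circ> projN) v\<bar> \<le> norm v" for v
    using f(3)[of "projM v"] g(3)[of "projN v"] norm_eq_max_proj[of v] by auto
  obtain S :: "'a \<Rightarrow>\<^sub>L 'b" where S: "positive_op S" "norm S \<le> 1"
    and S_eq: "\<And>v. S v = (f \<circ> projM) v *\<^sub>R x + (g \<circ> projN) v *\<^sub>R y"
    using positive_rank_two_operator[OF bl lin pos bound xy(1,2) xy(3)[THEN eq_refl]] by blast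
  have Sm: "S m = x" and Sn: "S n = y"
    using S_eq f(4) g(4) m(1) n(1) projM_eq_zero projN_eq_zero
      proj_of_sum[OF m(1) subspace_0[OF subspace_N]] proj_of_sum[OF subspace_0[OF subspace_M] n(1)]
      linear_0[OF f(1)] linear_0[OF g(1)]
    by simp_all
  have "norm (m + n) = 1"
    using norm_eq_max_proj[of "m + n"] proj_of_sum[OF m(1) n(1)] m(3) n(3) by simp
  moreover have "S (m + n) = x + y"
    using Sm Sn by (simp add: blinfun.add_right)
  ultimately have "1 \<le> norm S"
    using norm_blinfun[of S "m + n"] xy(3) by simp
  with S Sm Sn show ?thesis
    using that by simp
qed

lemma norm_attaining_positive_op_vanishes_on_N:
  fixes T :: "'a \<Rightarrow>\<^sub>L 'b::{banach, ordered_real_vector, lattice}"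
  assumes bl: "banach_lattice TYPE('b)" and strict: "strictly_monotone TYPE('b)"
    and T: "positive_op T" "norm T = 1" and u: "norm u = 1" "norm (T u) = 1"
    and m: "m \<in> M" "norm (u - m) < 1" and n: "n \<in> N" "0 \<le> n"
  shows "T n = 0"
proof (rule ccontr)
  assume "T n \<noteq> 0"
  then have "n \<noteq> 0" by auto
  define w where "w = lat_abs u"
  define t where "t = (1 - norm (u - m)) / norm n"
  have t: "0 < t" "t * norm n = 1 - norm (u - m)"
    using m(2) \<open>n \<noteq> 0\<close> unfolding t_def by simp_all
  have w: "0 \<le> w" "norm w = 1" "norm (T w) = 1"
    unfolding w_def using lat_abs_nonneg banach_lattice_norm_lat_abs[OF banach_lattice] u
      positive_op_norm_lat_abs[OF banach_lattice bl T u] by simp_all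
  have "norm (projM (w + t *\<^sub>R n)) \<le> 1"
    using norm_eq_max_proj[of w] w(2) projM_eq_zero[OF n(1)]
    by (simp add: linear_add[OF linear_projM] linear_scale[OF linear_projM])
  moreover have "norm (projN (w + t *\<^sub>R n)) \<le> 1"
  proof -
    have "projN (w + t *\<^sub>R n) = projN w + t *\<^sub>R n"
      using proj_of_sum(2)[OF subspace_0[OF subspace_M] n(1)]
      by (simp add: linear_add[OF linear_projN] linear_scale[OF linear_projN])
    moreover have "norm (projN w) \<le> norm (u - m)"
      unfolding w_def using norm_projN_lat_abs_le norm_projN_le_dist[OF m(1)] by (rule order_trans)
    ultimately show ?thesis
      using norm_triangle_ineq[of "projN w" "t *\<^sub>R n"] t by simp
  qed
  ultimately have "norm (T (w + t *\<^sub>R n)) \<le> 1"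
    using norm_blinfun[of T "w + t *\<^sub>R n"] norm_eq_max_proj[of "w + t *\<^sub>R n"] T(2) by simp
  moreover have "norm (T w) < norm (T w + t *\<^sub>R T n)"
    using strict T(1) w(1) n(2) t(1) \<open>T n \<noteq> 0\<close>
    unfolding strictly_monotone_def positive_op_def by (simp add: scaleR_nonneg_nonneg)
  ultimately show False
    using w(3) by (simp add: blinfun.add_right blinfun.scaleR_right)
qed

lemma BPBp_pos_imp_uniformly_monotone_normalized:
  fixes \<epsilon> :: real
  assumes nontrivial: "M \<noteq> {0}" "N \<noteq> {0}"
    and bl: "banach_lattice TYPE('b::{banach, ordered_real_vector, lattice})"
    and strict: "strictly_monotone TYPE('b)" and bpb: "BPBp_pos TYPE('a) TYPE('b)"
    and \<epsilon>: "0 < \<epsilon>" "\<epsilon> < 1"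
  shows "\<exists>\<eta>>0. \<forall>x y::'b.
    0 \<le> x \<and> 0 \<le> y \<and> norm (x + y) = 1 \<and> 1 - \<eta> < norm x \<longrightarrow> norm y < \<epsilon>"
proof -
  obtain \<eta> where \<eta>: "0 < \<eta>" and approx: "\<forall>(S::'a \<Rightarrow>\<^sub>L 'b) x0. positive_op S \<and> norm S = 1 \<and>
      norm x0 = 1 \<and> 1 - \<eta> < norm (S x0) \<longrightarrow> (\<exists>u0 (T::'a \<Rightarrow>\<^sub>L 'b). norm u0 = 1 \<and> positive_op T \<and>
      norm T = 1 \<and> norm (T u0) = 1 \<and> norm (u0 - x0) < \<epsilon> \<and> norm (T - S) < \<epsilon>)"
    using bpb[unfolded BPBp_pos_def, rule_format, OF conjI[OF \<epsilon>]] by blast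
  obtain m where m: "m \<in> M" "0 \<le> m" "norm m = 1"
    using banach_sublattice_normalized_nonneg[OF banach_lattice sublattice_M nontrivial(1)] .
  obtain n where n: "n \<in> N" "0 \<le> n" "norm n = 1"
    using banach_sublattice_normalized_nonneg[OF banach_lattice sublattice_N nontrivial(2)] .
  show ?thesis
  proof (intro exI[of _ \<eta>] conjI allI impI)
    fix x y :: 'b
    assume xy: "0 \<le> x \<and> 0 \<le> y \<and> norm (x + y) = 1 \<and> 1 - \<eta> < norm x"
    then obtain S :: "'a \<Rightarrow>\<^sub>L 'b" where S: "positive_op S" "norm S = 1" "S m = x" "S n = y"
      using two_point_positive_operator[OF bl m n] by blast
    then obtain u0 and T :: "'a \<Rightarrow>\<^sub>L 'b" where T: "norm u0 = 1" "positive_op T" "norm T = 1"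
      "norm (T u0) = 1" "norm (u0 - m) < \<epsilon>" "norm (T - S) < \<epsilon>"
      using approx m(3) xy by blast
    have "T n = 0"
      using norm_attaining_positive_op_vanishes_on_N[OF bl strict T(2,3,1,4) m(1) _ n(1,2)] T(5) \<epsilon>(2)
      by simp
    then have "norm y = norm ((S - T) n)"
      using S(4) by (simp add: blinfun.diff_left)
    also have "\<dots> \<le> norm (T - S)"
      using norm_blinfun[of "S - T" n] n(3) norm_minus_commute[of S T] by simp
    finally show "norm y < \<epsilon>"
      using T(6) by simp
  qed (fact \<eta>)
qed

end

theorem proposition4p3:
  fixes M N :: "'a::{banach, ordered_real_vector, lattice} set"
  assumes "banach_lattice TYPE('a)"
    and "banach_sublattice M" and "banach_sublattice N"
    and "M \<noteq> {0}" and "N \<noteq> {0}"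
    and "linf_direct_sum M N"
    and "positive_projections M N"
    and "banach_lattice TYPE('b::{banach, ordered_real_vector, lattice})"
    and "strictly_monotone TYPE('b)"
    and "BPBp_pos TYPE('a) TYPE('b)"
  shows "uniformly_monotone TYPE('b)"
proof -
  interpret lattice_linf_sum M N
    using assms(1-3,6,7) by unfold_locales
  show ?thesis
    using BPBp_pos_imp_uniformly_monotone_normalized[OF assms(4,5,8,9,10)]
    by (rule uniformly_monotoneI_normalized[OF assms(8)])
qed

end
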